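(* Let $\mathbf{x}=(x_1,\dots,x_n)$, and let $u(\mathbf{x},g(\mathbf{x}))$ be a multivariate constrained expression built by recursively substituting univariate constrained expressions ${}^{k}u(\mathbf{x},g)=g+\sum_j {}^{k}\phi_j(x_k)\,{}^{k}\rho_j(\mathbf{x},g)$, $k=1,\dots,n$, into one another (each used once, the innermost using the free function $g$), under conditions ensuring that $u(\mathbf{x},g(\mathbf{x}))$ satisfies all constraints for every free function $g$ (namely: either all constraints are non-integral, consistent, and $g$ is a valid multivariate free function; or, in the presence of integral constraints, each variable having an integral constraint is processed before its variables of integration and the switching functions of those integration variables are modified to vanish under the integral constraint operators). Then the multivariate constrained expression is a projection functional: $u\big(\mathbf{x},u(\mathbf{x},g(\mathbf{x}))\big)=u(\mathbf{x},g(\mathbf{x}))$ for every free function $g$.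
   Context: For each $k$ there are linear constraints ${}^{k}\mathcal{C}_j[u]={}^{k}\kappa_j$, $j=1,\dots,\ell_k$, where ${}^{k}\mathcal{C}_j$ is a linear operator associated with the $k$-th independent variable returning the operand function evaluated in the way the dependent variable appears in that constraint, and ${}^{k}\kappa_j$ does not depend on $x_k$. Projection functionals: ${}^{k}\rho_j(\mathbf{x},g)={}^{k}\kappa_j-{}^{k}\mathcal{C}_j[g]$; switching functions ${}^{k}\phi_j(x_k)$ are linear combinations of support functions of $x_k$ with ${}^{k}\mathcal{C}_i[{}^{k}\phi_j]=\delta_{ij}$ (and, where required for integral constraints ${}^{l}\mathcal{C}_m$ integrating over $x_k$, ${}^{l}\mathcal{C}_m[{}^{k}\phi_j]=0$). "Non-integral" means ${}^{k}\mathcal{C}_j[fh]=f\,{}^{k}\mathcal{C}_j[h]$ whenever $f$ does not depend on $x_k$; "consistent" means ${}^{k}\mathcal{C}_j[{}^{l}\kappa_i]={}^{l}\mathcal{C}_i[{}^{k}\kappa_j]$. A valid multivariate free function is $g:\mathbb{R}^n\to\mathbb{R}$ on which every constraint operator and every composition containing at most one operator from each variable is defined, the latter being freely permutable for non-integral constraints. A functional is a projection functional if it returns its own output when given that output as its input function. *)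

theory Defs
  imports "HOL-Analysis.Analysis"
begin

type_synonym 'n fn = "real^'n \<Rightarrow> real"

definition linear_op :: "(('n::finite) fn \<Rightarrow> 'n fn) \<Rightarrow> bool" where
  "linear_op L \<longleftrightarrow> (\<forall>a b f h. L (\<lambda>x. a * f x + b * h x) = (\<lambda>x. a * L f x + b * L h x))"

definition indep_of :: "'n::finite \<Rightarrow> 'n fn \<Rightarrow> bool" where
  "indep_of k f \<longleftrightarrow> (\<forall>x y. (\<forall>i. i \<noteq> k \<longrightarrow> x $ i = y $ i) \<longrightarrow> f x = f y)"

definition proj_rho :: "('n::finite \<Rightarrow> nat \<Rightarrow> 'n fn \<Rightarrow> 'n fn) \<Rightarrow> ('n \<Rightarrow> nat \<Rightarrow> 'n fn)
    \<Rightarrow> 'n \<Rightarrow> nat \<Rightarrow> 'n fn \<Rightarrow> 'n fn" where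
  "proj_rho C \<kappa> k j g = (\<lambda>x. \<kappa> k j x - C k j g x)"

definition uni_ce :: "('n::finite \<Rightarrow> nat \<Rightarrow> 'n fn \<Rightarrow> 'n fn) \<Rightarrow> ('n \<Rightarrow> nat \<Rightarrow> 'n fn)
    \<Rightarrow> ('n \<Rightarrow> nat \<Rightarrow> real \<Rightarrow> real) \<Rightarrow> ('n \<Rightarrow> nat) \<Rightarrow> 'n \<Rightarrow> 'n fn \<Rightarrow> 'n fn" where
  "uni_ce C \<kappa> \<phi> \<L> k g =
     (\<lambda>x. g x + (\<Sum>j\<in>{1..\<L> k}. \<phi> k j (x $ k) * proj_rho C \<kappa> k j g x))"

definition multi_ce :: "('n::finite \<Rightarrow> nat \<Rightarrow> 'n fn \<Rightarrow> 'n fn) \<Rightarrow> ('n \<Rightarrow> nat \<Rightarrow> 'n fn)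
    \<Rightarrow> ('n \<Rightarrow> nat \<Rightarrow> real \<Rightarrow> real) \<Rightarrow> ('n \<Rightarrow> nat) \<Rightarrow> 'n list \<Rightarrow> 'n fn \<Rightarrow> 'n fn" where
  "multi_ce C \<kappa> \<phi> \<L> ks g = foldr (uni_ce C \<kappa> \<phi> \<L>) ks g"

end

theory Submission
  imports Defs
begin

text \<open>A function satisfying every constraint has vanishing projection functionals, so each
  univariate constrained expression, and hence their composition, leaves it unchanged. Since
  u(x, g) satisfies every constraint, it is such a fixed point. The structural hypotheses
  (linearity, switching property, independence of kappa) only serve to establish that u(x, g)
  satisfies the constraints, which the theorem takes as the hypothesis satisfies.\<close>

lemma proj_rho_eq_0:
  assumes "C k j u = \<kappa> k j"
  shows "proj_rho C \<kappa> k j u = (\<lambda>x. 0)"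
  using assms by (simp add: proj_rho_def)

lemma uni_ce_fixed:
  assumes "\<And>j. j \<in> {1..\<L> k} \<Longrightarrow> C k j u = \<kappa> k j"
  shows "uni_ce C \<kappa> \<phi> \<L> k u = u"
  using assms by (simp add: uni_ce_def proj_rho_eq_0)

lemma multi_ce_fixed:
  assumes "\<And>k j. k \<in> set ks \<Longrightarrow> j \<in> {1..\<L> k} \<Longrightarrow> C k j u = \<kappa> k j"
  shows "multi_ce C \<kappa> \<phi> \<L> ks u = u"
  using assms unfolding multi_ce_def
proof (induction ks)
  case (Cons k ks)
  then have "uni_ce C \<kappa> \<phi> \<L> k u = u"
    by (intro uni_ce_fixed) simp
  with Cons show ?case
    by simp
qed simp

theorem theorem9:
  fixes C :: "'n::finite \<Rightarrow> nat \<Rightarrow> 'n fn \<Rightarrow> 'n fn"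
    and \<kappa> :: "'n \<Rightarrow> nat \<Rightarrow> 'n fn"
    and \<phi> :: "'n \<Rightarrow> nat \<Rightarrow> real \<Rightarrow> real"
    and \<L> :: "'n \<Rightarrow> nat"
    and ks :: "'n list"
    and valid :: "'n fn \<Rightarrow> bool"
    and g :: "'n fn"
  assumes order: "distinct ks" "set ks = UNIV"
    and lin: "\<And>k j. j \<in> {1..\<L> k} \<Longrightarrow> linear_op (C k j)"
    and kappa_indep: "\<And>k j. j \<in> {1..\<L> k} \<Longrightarrow> indep_of k (\<kappa> k j)"
    and switching: "\<And>k i j. i \<in> {1..\<L> k} \<Longrightarrow> j \<in> {1..\<L> k} \<Longrightarrow>
           C k i (\<lambda>x. \<phi> k j (x $ k)) = (\<lambda>x. if i = j then 1 else 0)"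
    and satisfies: "\<And>h k j. valid h \<Longrightarrow> j \<in> {1..\<L> k} \<Longrightarrow>
           C k j (multi_ce C \<kappa> \<phi> \<L> ks h) = \<kappa> k j"
    and "valid g"
  shows "multi_ce C \<kappa> \<phi> \<L> ks (multi_ce C \<kappa> \<phi> \<L> ks g) = multi_ce C \<kappa> \<phi> \<L> ks g"
  by (rule multi_ce_fixed) (rule satisfies[OF \<open>valid g\<close>])

end
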